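(* A simply laced (unitary) quiver admits a single unique Coulomb branch: the Coulomb branch computed by the monopole formula does not depend on the choice of node at which the residual center-of-mass $U(1)$ is ungauged.
   Context: Consider a $3d~\mathcal N=4$ quiver gauge theory whose quiver consists solely of unitary gauge nodes $U(N_i)$ (no flavor nodes). To compute its Coulomb branch via the monopole formula (Hilbert series), one must ungauge (decouple) a residual center-of-mass $U(1)$ symmetry, which is done by choosing a node and setting one of the magnetic charges at that node to zero (introducing a delta function on one component of the magnetic flux there); this choice is called the ungauging scheme. In the conformal dimension, the hypermultiplet contribution of an edge between nodes with magnetic fluxes $m^{(1)}, m^{(2)}$ is $\frac12\sum_{j,k}|\lambda m^{(1)}_j - m^{(2)}_k|$, with $\lambda=1$ for simply laced edges. A quiver is simply laced if all its edges are single edges (multiplicity $1$). *)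

theory Defs
  imports "HOL-Analysis.Analysis" "HOL-Computational_Algebra.Formal_Power_Series"
begin

text \<open>A unitary quiver without flavour nodes: nodes 0..n-1, node a carries gauge group U(N a);
  edges are triples (a, b, l) with lacing/multiplicity l (l = 1 is a single, simply laced edge).
  A magnetic flux is m :: nat => nat => int, m a j being the j-th magnetic charge at node a
  (j < N a); it vanishes outside this range.\<close>

definition quiver_wf :: "nat \<Rightarrow> (nat \<Rightarrow> nat) \<Rightarrow> (nat \<times> nat \<times> nat) list \<Rightarrow> bool" where
  "quiver_wf n N E \<longleftrightarrow> (\<forall>a<n. N a \<ge> 1) \<and> (\<forall>(a,b,l)\<in>set E. a < n \<and> b < n \<and> l \<ge> 1)"

definition quiver_connected :: "nat \<Rightarrow> (nat \<times> nat \<times> nat) list \<Rightarrow> bool" where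
  "quiver_connected n E \<longleftrightarrow>
     (\<forall>a<n. \<forall>b<n. (a, b) \<in> ({(x, y). \<exists>l. (x, y, l) \<in> set E \<or> (y, x, l) \<in> set E})\<^sup>*)"

definition simply_laced :: "(nat \<times> nat \<times> nat) list \<Rightarrow> bool" where
  "simply_laced E \<longleftrightarrow> (\<forall>(a,b,l)\<in>set E. l = 1)"

definition flux_space :: "nat \<Rightarrow> (nat \<Rightarrow> nat) \<Rightarrow> (nat \<Rightarrow> nat \<Rightarrow> int) set" where
  "flux_space n N = {m. \<forall>a j. (n \<le> a \<or> N a \<le> j) \<longrightarrow> m a j = 0}"

definition dominant :: "nat \<Rightarrow> (nat \<Rightarrow> nat) \<Rightarrow> (nat \<Rightarrow> nat \<Rightarrow> int) \<Rightarrow> bool" where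
  "dominant n N m \<longleftrightarrow> (\<forall>a<n. \<forall>j k. j \<le> k \<and> k < N a \<longrightarrow> m a k \<le> m a j)"

text \<open>Twice the conformal dimension:
  2\<Delta> = \<Sum>_edges \<Sum>_{j,k} |l m^a_j - m^b_k|  -  2 \<Sum>_a \<Sum>_{j<k} |m^a_j - m^a_k|.\<close>
definition conf_dim2 :: "nat \<Rightarrow> (nat \<Rightarrow> nat) \<Rightarrow> (nat \<times> nat \<times> nat) list \<Rightarrow> (nat \<Rightarrow> nat \<Rightarrow> int) \<Rightarrow> int" where
  "conf_dim2 n N E m =
     sum_list (map (\<lambda>(a, b, l). \<Sum>j<N a. \<Sum>k<N b. \<bar>int l * m a j - m b k\<bar>) E)
     - 2 * (\<Sum>a<n. \<Sum>j<N a. \<Sum>k<N a. if j < k then \<bar>m a j - m a k\<bar> else 0)"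

definition dressing_node :: "(nat \<Rightarrow> nat) \<Rightarrow> nat \<Rightarrow> (nat \<Rightarrow> nat \<Rightarrow> int) \<Rightarrow> real fps" where
  "dressing_node N a m =
     (\<Prod>v\<in>(\<lambda>j. m a j) ` {..<N a}.
        \<Prod>k\<in>{1..card {j. j < N a \<and> m a j = v}}. inverse (1 - fps_X ^ (2 * k)))"

definition dressing :: "nat \<Rightarrow> (nat \<Rightarrow> nat) \<Rightarrow> (nat \<Rightarrow> nat \<Rightarrow> int) \<Rightarrow> real fps" where
  "dressing n N m = (\<Prod>a<n. dressing_node N a m)"

text \<open>Dressing after removing the decoupled centre-of-mass U(1): (1 - t^2) P_G(t, m).\<close>
definition reduced_dressing :: "nat \<Rightarrow> (nat \<Rightarrow> nat) \<Rightarrow> (nat \<Rightarrow> nat \<Rightarrow> int) \<Rightarrow> real fps" where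
  "reduced_dressing n N m = (1 - fps_X ^ 2) * dressing n N m"

text \<open>Ungauging scheme (i, k): the k-th magnetic charge at node i is set to zero.\<close>
definition ungauged_fluxes :: "nat \<Rightarrow> (nat \<Rightarrow> nat) \<Rightarrow> nat \<Rightarrow> nat \<Rightarrow> (nat \<Rightarrow> nat \<Rightarrow> int) set" where
  "ungauged_fluxes n N i k = {m \<in> flux_space n N. dominant n N m \<and> m i k = 0}"

text \<open>Monopole formula HS(t) = \<Sum>_m t^(2\<Delta>(m)) (1-t^2) P_G(t,m), as a formal Laurent series
  in t: the coefficient of t^d, valued in [0,\<infinity>] (so it is always defined).\<close>
definition hilbert_series ::
  "nat \<Rightarrow> (nat \<Rightarrow> nat) \<Rightarrow> (nat \<times> nat \<times> nat) list \<Rightarrow> nat \<Rightarrow> nat \<Rightarrow> int \<Rightarrow> ennreal" where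
  "hilbert_series n N E i k d =
     (\<integral>\<^sup>+ m. ennreal (if conf_dim2 n N E m \<le> d
                        then fps_nth (reduced_dressing n N m) (nat (d - conf_dim2 n N E m))
                        else 0)
        \<partial>count_space (ungauged_fluxes n N i k))"

end

theory Submission
  imports Defs
begin

text \<open>Shifting every magnetic charge by the same integer c leaves each summand of the monopole
  formula unchanged: the vector multiplet terms and the dressing factors only see differences
  of charges, and for a simply laced edge the hypermultiplet term is
  \<open>\<bar>m\<^sup>a\<^sub>j - m\<^sup>b\<^sub>k\<bar>\<close>, again a difference. Since dominance is also preserved, the shift by
  \<open>-m\<^sup>i'\<^sub>k'\<close> is a bijection from the fluxes with \<open>m\<^sup>i\<^sub>k = 0\<close> onto those with
  \<open>m\<^sup>i'\<^sub>k' = 0\<close> that preserves the summand, so both ungauging schemes give the same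
  series.\<close>

definition shift_flux :: "nat \<Rightarrow> (nat \<Rightarrow> nat) \<Rightarrow> int \<Rightarrow> (nat \<Rightarrow> nat \<Rightarrow> int) \<Rightarrow> nat \<Rightarrow> nat \<Rightarrow> int"
  where "shift_flux n N c m = (\<lambda>a j. if a < n \<and> j < N a then m a j + c else 0)"

lemma shift_flux_apply [simp]: "a < n \<Longrightarrow> j < N a \<Longrightarrow> shift_flux n N c m a j = m a j + c"
  by (simp add: shift_flux_def)

lemma shift_flux_in_flux_space: "shift_flux n N c m \<in> flux_space n N"
  unfolding flux_space_def shift_flux_def by auto

lemma shift_flux_shift_flux:
  "shift_flux n N d (shift_flux n N c m) = shift_flux n N (c + d) m"
  unfolding shift_flux_def by (auto simp: fun_eq_iff)

lemma shift_flux_zero: "m \<in> flux_space n N \<Longrightarrow> shift_flux n N 0 m = m"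
  unfolding shift_flux_def flux_space_def by (auto simp: fun_eq_iff)

lemma dominant_shift_flux: "dominant n N m \<Longrightarrow> dominant n N (shift_flux n N c m)"
  unfolding dominant_def by auto

lemma conf_dim2_shift_flux:
  assumes "quiver_wf n N E" and "simply_laced E"
  shows "conf_dim2 n N E (shift_flux n N c m) = conf_dim2 n N E m"
proof -
  have edge_term: "(\<Sum>j<N a. \<Sum>k<N b. \<bar>int l * shift_flux n N c m a j - shift_flux n N c m b k\<bar>)
      = (\<Sum>j<N a. \<Sum>k<N b. \<bar>int l * m a j - m b k\<bar>)" if "(a, b, l) \<in> set E" for a b l
  proof -
    have "a < n" "b < n" "l = 1"
      using assms that unfolding quiver_wf_def simply_laced_def by auto
    then show ?thesis by simp
  qed
  have edges: "map (\<lambda>(a, b, l). \<Sum>j<N a. \<Sum>k<N b. \<bar>int l * shift_flux n N c m a j - shift_flux n N c m b k\<bar>) E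
      = map (\<lambda>(a, b, l). \<Sum>j<N a. \<Sum>k<N b. \<bar>int l * m a j - m b k\<bar>) E"
    using edge_term by (auto intro!: map_cong)
  have nodes: "(\<Sum>a<n. \<Sum>j<N a. \<Sum>k<N a.
        if j < k then \<bar>shift_flux n N c m a j - shift_flux n N c m a k\<bar> else 0)
      = (\<Sum>a<n. \<Sum>j<N a. \<Sum>k<N a. if j < k then \<bar>m a j - m a k\<bar> else 0)"
    by (auto intro!: sum.cong)
  show ?thesis
    unfolding conf_dim2_def edges nodes ..
qed

lemma dressing_node_shift_flux:
  assumes "a < n"
  shows "dressing_node N a (shift_flux n N c m) = dressing_node N a m"
proof -
  have charges: "(\<lambda>j. shift_flux n N c m a j) ` {..<N a} = (\<lambda>v. v + c) ` (\<lambda>j. m a j) ` {..<N a}"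
    using assms by (auto simp: image_image)
  have blocks: "{j. j < N a \<and> shift_flux n N c m a j = v + c} = {j. j < N a \<and> m a j = v}" for v
    using assms by auto
  show ?thesis
    unfolding dressing_node_def charges
    by (subst prod.reindex) (auto simp: inj_on_def blocks)
qed

lemma reduced_dressing_shift_flux:
  "reduced_dressing n N (shift_flux n N c m) = reduced_dressing n N m"
  unfolding reduced_dressing_def dressing_def
  by (simp add: dressing_node_shift_flux)

definition monopole_coeff ::
  "nat \<Rightarrow> (nat \<Rightarrow> nat) \<Rightarrow> (nat \<times> nat \<times> nat) list \<Rightarrow> int \<Rightarrow> (nat \<Rightarrow> nat \<Rightarrow> int) \<Rightarrow> ennreal"
  where "monopole_coeff n N E d m =
    ennreal (if conf_dim2 n N E m \<le> d
             then fps_nth (reduced_dressing n N m) (nat (d - conf_dim2 n N E m)) else 0)"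

lemma hilbert_series_eq_nn_integral:
  "hilbert_series n N E i k d =
     (\<integral>\<^sup>+ m. monopole_coeff n N E d m \<partial>count_space (ungauged_fluxes n N i k))"
  unfolding hilbert_series_def monopole_coeff_def ..

lemma monopole_coeff_shift_flux:
  assumes "quiver_wf n N E" and "simply_laced E"
  shows "monopole_coeff n N E d (shift_flux n N c m) = monopole_coeff n N E d m"
  unfolding monopole_coeff_def conf_dim2_shift_flux[OF assms] reduced_dressing_shift_flux ..

lemma shift_flux_ungauged_fluxes:
  assumes "m \<in> ungauged_fluxes n N i k" and "i' < n" and "k' < N i'"
  shows "shift_flux n N (- m i' k') m \<in> ungauged_fluxes n N i' k'"
  using assms by (simp add: ungauged_fluxes_def shift_flux_in_flux_space dominant_shift_flux)

lemma shift_flux_ungauged_fluxes_inverse: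
  assumes "m \<in> ungauged_fluxes n N i k" and "i < n" and "k < N i" and "i' < n" and "k' < N i'"
  shows "shift_flux n N (- shift_flux n N (- m i' k') m i k) (shift_flux n N (- m i' k') m) = m"
  using assms by (simp add: ungauged_fluxes_def shift_flux_shift_flux shift_flux_zero)

lemma bij_betw_ungauged_fluxes:
  assumes "i < n" and "k < N i" and "i' < n" and "k' < N i'"
  shows "bij_betw (\<lambda>m. shift_flux n N (- m i' k') m)
           (ungauged_fluxes n N i k) (ungauged_fluxes n N i' k')"
  by (rule bij_betw_byWitness[where f' = "\<lambda>m. shift_flux n N (- m i k) m"])
     (use assms shift_flux_ungauged_fluxes shift_flux_ungauged_fluxes_inverse in \<open>blast+\<close>)

theorem claim2:
  fixes n :: nat and N :: "nat \<Rightarrow> nat" and E :: "(nat \<times> nat \<times> nat) list"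
    and i k i' k' :: nat
  assumes "quiver_wf n N E"
    and "quiver_connected n E"
    and "simply_laced E"
    and "i < n" and "k < N i"
    and "i' < n" and "k' < N i'"
  shows "hilbert_series n N E i k = hilbert_series n N E i' k'"
proof
  fix d
  let ?shift = "\<lambda>m. shift_flux n N (- m i' k') m"
  have "hilbert_series n N E i k d
      = (\<integral>\<^sup>+ m. monopole_coeff n N E d (?shift m) \<partial>count_space (ungauged_fluxes n N i k))"
    unfolding hilbert_series_eq_nn_integral monopole_coeff_shift_flux[OF assms(1,3)] ..
  also have "\<dots> = hilbert_series n N E i' k' d"
    unfolding hilbert_series_eq_nn_integral
    using nn_integral_bij_count_space[OF bij_betw_ungauged_fluxes[OF assms(4-7)]] .
  finally show "hilbert_series n N E i k d = hilbert_series n N E i' k' d" .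
qed

end
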